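(* Let $(\rho,u,E,F_1,F_2)$ be an optimal quintuple on $[0,T]$ for the full Euler control problem, and assume that for every $a\in[0,T)$ there exists an admissible quintuple $(\tilde\rho,\tilde u,\tilde E,\tilde F_1,\tilde F_2)$ on $[a,T]$ with $(\tilde\rho,\tilde u,\tilde E)(a)=(\rho,u,E)(a)$, $\tilde F_1=-\lambda^{-1/2}(\tilde u-\bar v)$, $\tilde F_2=-\lambda^{-1/2}\big(2\tilde e+\tilde u\cdot(\tilde u-\bar v)\big)$, $\tilde e=\tilde E-\frac12|\tilde u|^2$. Then for all $0\le t_1\le t_2\le T$, $$\int_{\mathbb R^D}\rho(t_2)|u(t_2)-\bar v|^2+2\rho(t_2)e(t_2)\,dx\le C_\lambda\int_{\mathbb R^D}\rho(t_1)|u(t_1)-\bar v|^2+2\rho(t_1)e(t_1)\,dx,$$ where $C_\lambda=1+\lambda^{-1/2}$ if $\lambda\le1$ and $C_\lambda=1+\lambda^{1/2}$ if $\lambda>1$.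
   Context: Fix $D\ge1$, $T>0$, $\lambda>0$, $\bar v\in\mathbb R^D$, and an interaction kernel $\Psi:\mathbb R^D\times\mathbb R^D\to\mathbb R$ which is Lipschitz continuous, symmetric ($\Psi(x,y)=\Psi(y,x)$), nonnegative and bounded. For $0\le a<T$, an admissible quintuple on $[a,T]$ for the controlled full Euler system is $(\rho,u,E,F_1,F_2)$ with $\rho\in C^1([a,T]\times\mathbb R^D;[0,\infty))$, $u\in C^1([a,T]\times\mathbb R^D;\mathbb R^D)$, $E\in C^1([a,T]\times\mathbb R^D;\mathbb R)$, $F_1\in C([a,T]\times\mathbb R^D;\mathbb R^D)$, $F_2\in C([a,T]\times\mathbb R^D;\mathbb R)$, such that the internal energy $e:=E-\frac12|u|^2$ satisfies $e>0$ everywhere, there is a compact set $K\subset\mathbb R^D$ with $\operatorname{supp}\rho(t,\cdot)\subset K$ for all $t$, and, with pressure $p:=\frac{2}{D}\rho e$, the system $\partial_t\rho+\nabla_x\cdot(\rho u)=0$, $\partial_t(\rho u)+\nabla_x\cdot(\rho u\otimes u+pI)=Q_1+\rho F_1$, $\partial_t(\rho E)+\nabla_x\cdot(\rho Eu+pu)=Q_2+\rho F_2$ holds classically, where $Q_1(t,x)=\int\Psi(x,y)\rho(t,x)\rho(t,y)\big(u(t,y)-u(t,x)\big)dy$ and $Q_2(t,x)=\int\Psi(x,y)\rho(t,x)\rho(t,y)\big(u(t,x)\cdot u(t,y)-E(t,x)-E(t,y)\big)dy$. Define $G(F_1,F_2)=\rho|F_1|^2+\frac{\rho}{2e}|F_2-u\cdot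 F_1|^2$ and the cost on $[a,T]$, $J^{[a,T]}_{H_2}=\int_a^T\int_{\mathbb R^D}\rho|u-\bar v|^2+2\rho e+\lambda G(F_1,F_2)\,dx\,dt$. An admissible quintuple on $[0,T]$ is optimal if for every $a\in[0,T)$ its restriction to $[a,T]$ minimizes $J^{[a,T]}_{H_2}$ among all admissible quintuples on $[a,T]$ with the same values of $(\rho,u,E)$ at time $a$. *)

theory Defs
  imports "HOL-Analysis.Analysis"
begin

text \<open>Positions live in an abstract Euclidean space 'a, so D = DIM('a) (automatically at least 1).
Fields are curried functions of time and position.\<close>

definition C1_on :: "real \<Rightarrow> real \<Rightarrow> (real \<Rightarrow> 'a::euclidean_space \<Rightarrow> 'b::real_normed_vector) \<Rightarrow> bool" where
  "C1_on a T f \<longleftrightarrow>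
     (\<exists>ft fx. (\<forall>t\<in>{a..T}. \<forall>x.
         ((\<lambda>p. f (fst p) (snd p)) has_derivative (\<lambda>h. fst h *\<^sub>R ft t x + fx t x (snd h)))
           (at (t, x) within {a..T} \<times> UNIV))
       \<and> continuous_on ({a..T} \<times> UNIV) (\<lambda>p. ft (fst p) (snd p))
       \<and> (\<forall>i\<in>Basis. continuous_on ({a..T} \<times> UNIV) (\<lambda>p. fx (fst p) (snd p) i)))"

definition C0_on :: "real \<Rightarrow> real \<Rightarrow> (real \<Rightarrow> 'a::euclidean_space \<Rightarrow> 'b::real_normed_vector) \<Rightarrow> bool" where
  "C0_on a T f \<longleftrightarrow> continuous_on ({a..T} \<times> UNIV) (\<lambda>p. f (fst p) (snd p))"

definition pdt :: "real \<Rightarrow> real \<Rightarrow> (real \<Rightarrow> 'a::euclidean_space \<Rightarrow> 'b::real_normed_vector) \<Rightarrow> real \<Rightarrow> 'a \<Rightarrow> 'b" where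
  "pdt a T f t x = vector_derivative (\<lambda>s. f s x) (at t within {a..T})"

definition pdx :: "'a::euclidean_space \<Rightarrow> ('a \<Rightarrow> 'b::real_normed_vector) \<Rightarrow> 'a \<Rightarrow> 'b" where
  "pdx i g x = vector_derivative (\<lambda>h. g (x + h *\<^sub>R i)) (at 0)"

definition ie :: "(real \<Rightarrow> 'a::euclidean_space \<Rightarrow> 'a) \<Rightarrow> (real \<Rightarrow> 'a \<Rightarrow> real) \<Rightarrow> real \<Rightarrow> 'a \<Rightarrow> real" where
  "ie u E t x = E t x - (norm (u t x))\<^sup>2 / 2"

definition prs :: "(real \<Rightarrow> 'a::euclidean_space \<Rightarrow> real) \<Rightarrow> (real \<Rightarrow> 'a \<Rightarrow> 'a) \<Rightarrow> (real \<Rightarrow> 'a \<Rightarrow> real) \<Rightarrow> real \<Rightarrow> 'a \<Rightarrow> real" where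
  "prs \<rho> u E t x = 2 / real DIM('a) * \<rho> t x * ie u E t x"

definition Q1 :: "('a::euclidean_space \<Rightarrow> 'a \<Rightarrow> real) \<Rightarrow> (real \<Rightarrow> 'a \<Rightarrow> real) \<Rightarrow> (real \<Rightarrow> 'a \<Rightarrow> 'a) \<Rightarrow> real \<Rightarrow> 'a \<Rightarrow> 'a" where
  "Q1 \<Psi> \<rho> u t x = (\<integral>y. (\<Psi> x y * \<rho> t x * \<rho> t y) *\<^sub>R (u t y - u t x) \<partial>lborel)"

definition Q2 :: "('a::euclidean_space \<Rightarrow> 'a \<Rightarrow> real) \<Rightarrow> (real \<Rightarrow> 'a \<Rightarrow> real) \<Rightarrow> (real \<Rightarrow> 'a \<Rightarrow> 'a) \<Rightarrow> (real \<Rightarrow> 'a \<Rightarrow> real) \<Rightarrow> real \<Rightarrow> 'a \<Rightarrow> real" where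
  "Q2 \<Psi> \<rho> u E t x = (\<integral>y. \<Psi> x y * \<rho> t x * \<rho> t y * (u t x \<bullet> u t y - E t x - E t y) \<partial>lborel)"

definition admissible ::
  "('a::euclidean_space \<Rightarrow> 'a \<Rightarrow> real) \<Rightarrow> real \<Rightarrow> real \<Rightarrow> (real \<Rightarrow> 'a \<Rightarrow> real) \<Rightarrow> (real \<Rightarrow> 'a \<Rightarrow> 'a)
    \<Rightarrow> (real \<Rightarrow> 'a \<Rightarrow> real) \<Rightarrow> (real \<Rightarrow> 'a \<Rightarrow> 'a) \<Rightarrow> (real \<Rightarrow> 'a \<Rightarrow> real) \<Rightarrow> bool" where
  "admissible \<Psi> a T \<rho> u E F1 F2 \<longleftrightarrow>
     C1_on a T \<rho> \<and> C1_on a T u \<and> C1_on a T E \<and> C0_on a T F1 \<and> C0_on a T F2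
   \<and> (\<forall>t\<in>{a..T}. \<forall>x. 0 \<le> \<rho> t x)
   \<and> (\<forall>t\<in>{a..T}. \<forall>x. 0 < ie u E t x)
   \<and> (\<exists>K. compact K \<and> (\<forall>t\<in>{a..T}. closure {x. \<rho> t x \<noteq> 0} \<subseteq> K))
   \<and> (\<forall>t\<in>{a..T}. \<forall>x.
        pdt a T \<rho> t x + (\<Sum>i\<in>Basis. pdx i (\<lambda>y. \<rho> t y * (u t y \<bullet> i)) x) = 0
      \<and> pdt a T (\<lambda>s y. \<rho> s y *\<^sub>R u s y) t x
          + (\<Sum>i\<in>Basis. pdx i (\<lambda>y. (\<rho> t y * (u t y \<bullet> i)) *\<^sub>R u t y + prs \<rho> u E t y *\<^sub>R i) x)
        = Q1 \<Psi> \<rho> u t x + \<rho> t x *\<^sub>R F1 t x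
      \<and> pdt a T (\<lambda>s y. \<rho> s y * E s y) t x
          + (\<Sum>i\<in>Basis. pdx i (\<lambda>y. (\<rho> t y * E t y + prs \<rho> u E t y) * (u t y \<bullet> i)) x)
        = Q2 \<Psi> \<rho> u E t x + \<rho> t x * F2 t x)"

definition Gc :: "(real \<Rightarrow> 'a::euclidean_space \<Rightarrow> real) \<Rightarrow> (real \<Rightarrow> 'a \<Rightarrow> 'a) \<Rightarrow> (real \<Rightarrow> 'a \<Rightarrow> real)
    \<Rightarrow> (real \<Rightarrow> 'a \<Rightarrow> 'a) \<Rightarrow> (real \<Rightarrow> 'a \<Rightarrow> real) \<Rightarrow> real \<Rightarrow> 'a \<Rightarrow> real" where
  "Gc \<rho> u E F1 F2 t x = \<rho> t x * (norm (F1 t x))\<^sup>2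
      + \<rho> t x / (2 * ie u E t x) * (F2 t x - u t x \<bullet> F1 t x)\<^sup>2"

definition cost :: "real \<Rightarrow> 'a::euclidean_space \<Rightarrow> real \<Rightarrow> real \<Rightarrow> (real \<Rightarrow> 'a \<Rightarrow> real) \<Rightarrow> (real \<Rightarrow> 'a \<Rightarrow> 'a)
    \<Rightarrow> (real \<Rightarrow> 'a \<Rightarrow> real) \<Rightarrow> (real \<Rightarrow> 'a \<Rightarrow> 'a) \<Rightarrow> (real \<Rightarrow> 'a \<Rightarrow> real) \<Rightarrow> real" where
  "cost lam vbar a T \<rho> u E F1 F2 =
     (LINT t:{a..T}|lborel. (\<integral>x. \<rho> t x * (norm (u t x - vbar))\<^sup>2 + 2 * \<rho> t x * ie u E t x
                                  + lam * Gc \<rho> u E F1 F2 t x \<partial>lborel))"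

definition optimal ::
  "('a::euclidean_space \<Rightarrow> 'a \<Rightarrow> real) \<Rightarrow> real \<Rightarrow> 'a \<Rightarrow> real \<Rightarrow> (real \<Rightarrow> 'a \<Rightarrow> real) \<Rightarrow> (real \<Rightarrow> 'a \<Rightarrow> 'a)
    \<Rightarrow> (real \<Rightarrow> 'a \<Rightarrow> real) \<Rightarrow> (real \<Rightarrow> 'a \<Rightarrow> 'a) \<Rightarrow> (real \<Rightarrow> 'a \<Rightarrow> real) \<Rightarrow> bool" where
  "optimal \<Psi> lam vbar T \<rho> u E F1 F2 \<longleftrightarrow>
     admissible \<Psi> 0 T \<rho> u E F1 F2 \<and>
     (\<forall>a\<in>{0..<T}. \<forall>\<rho>' u' E' F1' F2'.
        admissible \<Psi> a T \<rho>' u' E' F1' F2'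
        \<and> (\<forall>x. \<rho>' a x = \<rho> a x \<and> u' a x = u a x \<and> E' a x = E a x)
        \<longrightarrow> cost lam vbar a T \<rho> u E F1 F2 \<le> cost lam vbar a T \<rho>' u' E' F1' F2')"

definition energy :: "'a::euclidean_space \<Rightarrow> (real \<Rightarrow> 'a \<Rightarrow> real) \<Rightarrow> (real \<Rightarrow> 'a \<Rightarrow> 'a) \<Rightarrow> (real \<Rightarrow> 'a \<Rightarrow> real) \<Rightarrow> real \<Rightarrow> real" where
  "energy vbar \<rho> u E t = (\<integral>x. \<rho> t x * (norm (u t x - vbar))\<^sup>2 + 2 * \<rho> t x * ie u E t x \<partial>lborel)"

end

(* Write H(t) for the energy of (rho, u, E) relative to vbar.  For any admissible flow,
   differentiating under the integral and inserting the three balance laws gives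
   H'(t) <= 2 int rho (F2 - vbar . F1): the flux divergences integrate to zero, the alignment
   term Q1 integrates to zero by the symmetry of Psi, and Q2 <= 0 pointwise.  Completing two
   squares bounds 2 rho (F2 - vbar . F1) by lam^(-1/2) times the running cost, so
   H(t2) - H(t1) <= lam^(-1/2) J(t1, T) along the optimal control.  Along the feedback control
   the running cost is exactly 2 H and the same estimate reads H' <= -2 lam^(-1/2) H, so its
   cost on [t1, T] is at most lam^(1/2) H(t1).  Optimality compares the two costs, giving
   H(t2) <= 2 H(t1), and 2 <= C_lam. *)

theory Submission
  imports Defs
begin

section \<open>Integrals of compactly supported functions\<close>

lemma integrable_lborel_compact_support:
  fixes f :: "'a::euclidean_space \<Rightarrow> 'b::{banach, second_countable_topology}"
  assumes "continuous_on UNIV f" "compact K" "\<And>x. x \<notin> K \<Longrightarrow> f x = 0"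
  shows "integrable lborel f"
proof -
  have "integrable lborel (\<lambda>x. indicator K x *\<^sub>R f x)"
    using assms by (intro borel_integrable_compact) (auto intro: continuous_on_subset)
  moreover have "(\<lambda>x. indicator K x *\<^sub>R f x) = f"
    using assms(3) by (auto simp: indicator_def fun_eq_iff)
  ultimately show ?thesis by simp
qed

lemma lborel_integral_eq_integral_cbox:
  fixes f :: "'a::euclidean_space \<Rightarrow> 'b::euclidean_space"
  assumes "continuous_on UNIV f" "compact K" "\<And>x. x \<notin> K \<Longrightarrow> f x = 0" "K \<subseteq> cbox a b"
  shows "integral\<^sup>L lborel f = integral (cbox a b) f"
proof -
  have "integral\<^sup>L lborel f = integral UNIV f"
    using integral_lborel[OF integrable_lborel_compact_support[OF assms(1-3)]] by simp
  also have "\<dots> = integral UNIV (\<lambda>x. if x \<in> cbox a b then f x else 0)"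
    using assms(3,4) by (intro arg_cong[where f="integral UNIV"]) (auto simp: fun_eq_iff)
  also have "\<dots> = integral (cbox a b) f"
    by (rule integral_restrict_UNIV)
  finally show ?thesis .
qed

lemma lborel_integral_translate:
  fixes g :: "'a::euclidean_space \<Rightarrow> real"
  assumes "g \<in> borel_measurable borel"
  shows "(\<integral>x. g (x + c) \<partial>lborel) = integral\<^sup>L lborel g"
proof -
  have "integral\<^sup>L lborel g = integral\<^sup>L (distr lborel borel ((+) c)) g"
    by (simp add: lborel_distr_plus)
  also have "\<dots> = (\<integral>x. g (c + x) \<partial>lborel)"
    by (rule integral_distr[OF _ assms]) simp
  finally show ?thesis by (simp add: add.commute)
qed

lemma continuous_on_slice:
  assumes "continuous_on (S \<times> UNIV) (\<lambda>p. f (fst p) (snd p))" "t \<in> S"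
  shows "continuous_on UNIV (f t)"
proof -
  have "continuous_on UNIV (\<lambda>y. (\<lambda>p. f (fst p) (snd p)) (t, y))"
    by (rule continuous_on_compose2[OF assms(1)]) (use assms(2) in \<open>auto intro!: continuous_intros\<close>)
  then show ?thesis by simp
qed

lemma continuous_on_compose_fst: "continuous_on UNIV g \<Longrightarrow> continuous_on UNIV (\<lambda>p. g (fst p))"
  and continuous_on_compose_snd: "continuous_on UNIV g \<Longrightarrow> continuous_on UNIV (\<lambda>p. g (snd p))"
  by (rule continuous_on_compose2; auto intro!: continuous_intros)+

lemma has_derivative_eq_0_outside_closed:
  assumes "(g has_derivative g') (at x)" "closed K" "\<And>y. y \<notin> K \<Longrightarrow> g y = 0" "x \<notin> K"
  shows "g' = (\<lambda>_. 0)"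
proof -
  have "(g has_derivative (\<lambda>_. 0)) (at x)"
    by (rule has_derivative_transform_within_open[OF has_derivative_const[of 0], of "- K"])
      (use assms in auto)
  then show ?thesis using has_derivative_unique[OF assms(1)] by blast
qed

lemma continuous_on_lborel_integral:
  fixes f :: "'c::topological_space \<Rightarrow> 'a::euclidean_space \<Rightarrow> 'b::euclidean_space"
  assumes cont: "continuous_on (S \<times> UNIV) (\<lambda>p. f (fst p) (snd p))"
    and K: "compact K" and supp: "\<And>s x. s \<in> S \<Longrightarrow> x \<notin> K \<Longrightarrow> f s x = 0"
  shows "continuous_on S (\<lambda>s. \<integral>x. f s x \<partial>lborel)"
proof -
  obtain c where Kc: "K \<subseteq> cbox (-c) c"
    using bounded_subset_cbox_symmetric[OF compact_imp_bounded[OF K]] by blast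
  have cbox_cont: "continuous_on S (\<lambda>s. integral (cbox (-c) c) (f s))"
    by (rule integral_continuous_on_param, unfold split_beta')
      (rule continuous_on_subset[OF cont], auto)
  have "(\<integral>x. f s x \<partial>lborel) = integral (cbox (-c) c) (f s)" if "s \<in> S" for s
    using lborel_integral_eq_integral_cbox[OF continuous_on_slice[OF cont that] K _ Kc] supp that
    by blast
  then show ?thesis
    using continuous_on_eq[OF cbox_cont] by simp
qed

lemma has_vector_derivative_lborel_integral:
  fixes f f' :: "real \<Rightarrow> 'a::euclidean_space \<Rightarrow> 'b::euclidean_space"
  assumes deriv: "\<And>s x. s \<in> S \<Longrightarrow> ((\<lambda>s. f s x) has_vector_derivative f' s x) (at s within S)"
    and cont: "continuous_on (S \<times> UNIV) (\<lambda>p. f (fst p) (snd p))"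
    and cont': "continuous_on (S \<times> UNIV) (\<lambda>p. f' (fst p) (snd p))"
    and K: "compact K" and supp: "\<And>s x. s \<in> S \<Longrightarrow> x \<notin> K \<Longrightarrow> f s x = 0"
    and supp': "\<And>x. x \<notin> K \<Longrightarrow> f' t x = 0"
    and S: "convex S" "t \<in> S"
  shows "((\<lambda>s. \<integral>x. f s x \<partial>lborel) has_vector_derivative (\<integral>x. f' t x \<partial>lborel)) (at t within S)"
proof -
  obtain c where Kc: "K \<subseteq> cbox (-c) c"
    using bounded_subset_cbox_symmetric[OF compact_imp_bounded[OF K]] by blast
  have cbox_deriv: "((\<lambda>s. integral (cbox (-c) c) (f s)) has_vector_derivative integral (cbox (-c) c) (f' t))
      (at t within S)"
  proof (rule leibniz_rule_vector_derivative[OF deriv _ _ S(2,1)])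
    show "f s integrable_on cbox (- c) c" if "s \<in> S" for s
      by (rule integrable_continuous, rule continuous_on_subset[OF continuous_on_slice[OF cont that]]) simp
    show "continuous_on (S \<times> cbox (- c) c) (\<lambda>(s, x). f' s x)"
      unfolding split_beta' by (rule continuous_on_subset[OF cont']) auto
  qed
  have eq: "(\<integral>x. f s x \<partial>lborel) = integral (cbox (-c) c) (f s)" if "s \<in> S" for s
    using lborel_integral_eq_integral_cbox[OF continuous_on_slice[OF cont that] K _ Kc] supp that
    by blast
  have "((\<lambda>s. \<integral>x. f s x \<partial>lborel) has_vector_derivative integral (cbox (-c) c) (f' t)) (at t within S)"
    by (rule has_vector_derivative_transform[OF S(2) _ cbox_deriv]) (rule eq)
  then show ?thesis
    using lborel_integral_eq_integral_cbox[OF continuous_on_slice[OF cont' S(2)] K supp' Kc] by simp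
qed

lemma translate_notin_bounded:
  fixes x i :: "'a::real_normed_vector"
  assumes "\<And>y. y \<in> K \<Longrightarrow> norm y \<le> R" "x \<notin> cball 0 (R + norm i)" "\<bar>s\<bar> \<le> 1"
  shows "x + s *\<^sub>R i \<notin> K"
proof
  assume "x + s *\<^sub>R i \<in> K"
  then have "norm (x + s *\<^sub>R i) \<le> R" by (rule assms(1))
  moreover have "norm x \<le> norm (x + s *\<^sub>R i) + \<bar>s\<bar> * norm i"
    using norm_triangle_ineq4[of "x + s *\<^sub>R i" "s *\<^sub>R i"] by simp
  moreover have "\<bar>s\<bar> * norm i \<le> norm i"
    using assms(3) by (simp add: mult_left_le_one_le)
  ultimately show False using assms(2) by simp
qed

lemma has_vector_derivative_lborel_integral_translate:
  fixes g :: "'a::euclidean_space \<Rightarrow> real"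
  assumes deriv: "\<And>x. (g has_derivative g' x) (at x)"
    and cont: "continuous_on UNIV (\<lambda>x. g' x i)"
    and K: "compact K" and supp: "\<And>x. x \<notin> K \<Longrightarrow> g x = 0"
  shows "((\<lambda>s. \<integral>x. g (x + s *\<^sub>R i) \<partial>lborel) has_vector_derivative (\<integral>x. g' x i \<partial>lborel)) (at 0)"
proof -
  have cont_g: "continuous_on UNIV g"
    using has_derivative_continuous[OF deriv] by (simp add: continuous_at_imp_continuous_on)
  obtain R where R: "\<And>x. x \<in> K \<Longrightarrow> norm x \<le> R"
    using compact_imp_bounded[OF K] unfolding bounded_iff by auto
  have "((\<lambda>s. \<integral>x. g (x + s *\<^sub>R i) \<partial>lborel) has_vector_derivative (\<integral>x. g' (x + 0 *\<^sub>R i) i \<partial>lborel))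
      (at 0 within ball 0 1)"
  proof (rule has_vector_derivative_lborel_integral[where K="cball 0 (R + norm i)"])
    fix s x
    have "((\<lambda>s. x + s *\<^sub>R i) has_derivative (\<lambda>h. h *\<^sub>R i)) (at s within ball 0 1)"
      by (auto intro!: derivative_eq_intros)
    from has_derivative_compose[OF this deriv]
    show "((\<lambda>s. g (x + s *\<^sub>R i)) has_vector_derivative g' (x + s *\<^sub>R i) i) (at s within ball 0 1)"
      unfolding has_vector_derivative_def
      by (simp add: linear_scale[OF has_derivative_linear[OF deriv]])
  next
    show "continuous_on (ball 0 1 \<times> UNIV) (\<lambda>p. g (snd p + fst p *\<^sub>R i))"
      by (rule continuous_on_compose2[OF cont_g]) (auto intro!: continuous_intros)
    show "continuous_on (ball 0 1 \<times> UNIV) (\<lambda>p. g' (snd p + fst p *\<^sub>R i) i)"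
      by (rule continuous_on_compose2[OF cont]) (auto intro!: continuous_intros)
  next
    fix s and x :: 'a assume "s \<in> ball (0::real) 1" "x \<notin> cball 0 (R + norm i)"
    then show "g (x + s *\<^sub>R i) = 0"
      by (intro supp translate_notin_bounded[OF R]) auto
  next
    fix x :: 'a assume "x \<notin> cball 0 (R + norm i)"
    then show "g' (x + 0 *\<^sub>R i) i = 0"
      using has_derivative_eq_0_outside_closed[OF deriv compact_imp_closed[OF K] supp]
        translate_notin_bounded[OF R, where x=x and i=i and s=0] by simp
  qed auto
  moreover have "at (0::real) within ball 0 1 = at 0"
    by (rule at_within_open) auto
  ultimately show ?thesis
    by simp
qed

lemma lborel_integral_partial_derivative_eq_0:
  fixes g :: "'a::euclidean_space \<Rightarrow> real"
  assumes deriv: "\<And>x. (g has_derivative g' x) (at x)"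
    and cont: "continuous_on UNIV (\<lambda>x. g' x i)"
    and K: "compact K" and supp: "\<And>x. x \<notin> K \<Longrightarrow> g x = 0"
  shows "(\<integral>x. g' x i \<partial>lborel) = 0"
proof -
  have "(\<integral>x. g (x + s *\<^sub>R i) \<partial>lborel) = integral\<^sup>L lborel g" for s
    using has_derivative_continuous[OF deriv]
    by (intro lborel_integral_translate borel_measurable_continuous_onI)
      (simp add: continuous_at_imp_continuous_on)
  with has_vector_derivative_lborel_integral_translate[OF assms]
  have "((\<lambda>s. integral\<^sup>L lborel g) has_vector_derivative (\<integral>x. g' x i \<partial>lborel)) (at 0)"
    by simp
  from vector_derivative_unique_at[OF this has_vector_derivative_const]
  show ?thesis .
qed

lemma double_integral_antisym_eq_0:
  fixes k :: "'a \<Rightarrow> 'a \<Rightarrow> real"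
  assumes "sigma_finite_measure M" and int: "integrable (M \<Otimes>\<^sub>M M) (\<lambda>(x, y). k x y)"
    and antisym: "\<And>x y. k y x = - k x y"
  shows "(\<integral>x. (\<integral>y. k x y \<partial>M) \<partial>M) = 0"
proof -
  interpret pair_sigma_finite M M
    by (simp add: assms(1) pair_sigma_finite_def)
  have "(\<integral>x. (\<integral>y. k x y \<partial>M) \<partial>M) = (\<integral>y. (\<integral>x. k x y \<partial>M) \<partial>M)"
    using Fubini_integral[OF int] by simp
  also have "\<dots> = (\<integral>y. (\<integral>x. - k y x \<partial>M) \<partial>M)"
    by (intro Bochner_Integration.integral_cong refl antisym)
  also have "\<dots> = - (\<integral>y. (\<integral>x. k y x \<partial>M) \<partial>M)"
    by simp
  finally show ?thesis by simp
qed

lemma has_vector_derivative_le_imp_diff_le_integral: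
  fixes H :: "real \<Rightarrow> real"
  assumes "a \<le> b"
    and "\<And>t. t \<in> {a..b} \<Longrightarrow> (H has_vector_derivative H' t) (at t within {a..b})"
    and "\<And>t. t \<in> {a..b} \<Longrightarrow> H' t \<le> g t" and "g integrable_on {a..b}"
  shows "H b - H a \<le> integral {a..b} g"
  by (rule has_integral_le[OF fundamental_theorem_of_calculus[OF assms(1,2)] integrable_integral[OF assms(4)]])
    (use assms(3) in auto)

section \<open>Families with continuous time and space derivatives\<close>

definition has_C1_derivs :: "real \<Rightarrow> real \<Rightarrow> (real \<Rightarrow> 'a::euclidean_space \<Rightarrow> 'b::real_normed_vector)
    \<Rightarrow> (real \<Rightarrow> 'a \<Rightarrow> 'b) \<Rightarrow> (real \<Rightarrow> 'a \<Rightarrow> 'a \<Rightarrow> 'b) \<Rightarrow> bool" where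
  "has_C1_derivs a T f ft fx \<longleftrightarrow>
    (\<forall>t\<in>{a..T}. \<forall>x. ((\<lambda>s. f s x) has_vector_derivative ft t x) (at t within {a..T})
         \<and> (f t has_derivative fx t x) (at x))
    \<and> continuous_on ({a..T} \<times> UNIV) (\<lambda>p. f (fst p) (snd p))
    \<and> continuous_on ({a..T} \<times> UNIV) (\<lambda>p. ft (fst p) (snd p))
    \<and> (\<forall>v. continuous_on ({a..T} \<times> UNIV) (\<lambda>p. fx (fst p) (snd p) v))"

lemma has_C1_derivsI:
  assumes "\<And>t x. t \<in> {a..T} \<Longrightarrow> ((\<lambda>s. f s x) has_vector_derivative ft t x) (at t within {a..T})"
    and "\<And>t x. t \<in> {a..T} \<Longrightarrow> (f t has_derivative fx t x) (at x)"
    and "continuous_on ({a..T} \<times> UNIV) (\<lambda>p. f (fst p) (snd p))"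
    and "continuous_on ({a..T} \<times> UNIV) (\<lambda>p. ft (fst p) (snd p))"
    and "\<And>v. continuous_on ({a..T} \<times> UNIV) (\<lambda>p. fx (fst p) (snd p) v)"
  shows "has_C1_derivs a T f ft fx"
  using assms unfolding has_C1_derivs_def by auto

lemma has_C1_derivsD:
  assumes "has_C1_derivs a T f ft fx"
  shows "\<And>t x. t \<in> {a..T} \<Longrightarrow> ((\<lambda>s. f s x) has_vector_derivative ft t x) (at t within {a..T})"
    and "\<And>t x. t \<in> {a..T} \<Longrightarrow> (f t has_derivative fx t x) (at x)"
    and "continuous_on ({a..T} \<times> UNIV) (\<lambda>p. f (fst p) (snd p))"
    and "continuous_on ({a..T} \<times> UNIV) (\<lambda>p. ft (fst p) (snd p))"
    and "\<And>v. continuous_on ({a..T} \<times> UNIV) (\<lambda>p. fx (fst p) (snd p) v)"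
  using assms unfolding has_C1_derivs_def by auto

lemma continuous_on_linear_apply:
  fixes L :: "'c::topological_space \<Rightarrow> 'a::euclidean_space \<Rightarrow> 'b::real_normed_vector"
  assumes lin: "\<And>p. p \<in> S \<Longrightarrow> linear (L p)"
    and cont: "\<And>i. i \<in> Basis \<Longrightarrow> continuous_on S (\<lambda>p. L p i)"
  shows "continuous_on S (\<lambda>p. L p v)"
proof -
  have "continuous_on S (\<lambda>p. \<Sum>i\<in>Basis. (v \<bullet> i) *\<^sub>R L p i)"
    using cont by (intro continuous_intros) auto
  moreover have "(\<Sum>i\<in>Basis. (v \<bullet> i) *\<^sub>R L p i) = L p v" if "p \<in> S" for p
  proof -
    have "L p v = L p (\<Sum>i\<in>Basis. (v \<bullet> i) *\<^sub>R i)"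
      by (simp add: euclidean_representation)
    also have "\<dots> = (\<Sum>i\<in>Basis. (v \<bullet> i) *\<^sub>R L p i)"
      by (simp add: linear_sum[OF lin[OF that]] o_def linear_scale[OF lin[OF that]])
    finally show ?thesis by simp
  qed
  ultimately show ?thesis by (rule continuous_on_eq)
qed

lemma has_derivative_partials:
  fixes f :: "real \<Rightarrow> 'a::real_normed_vector \<Rightarrow> 'b::real_normed_vector"
  assumes D: "((\<lambda>p. f (fst p) (snd p)) has_derivative (\<lambda>h. fst h *\<^sub>R ft + fx (snd h)))
      (at (t, x) within S \<times> UNIV)"
    and t: "t \<in> S"
  shows "linear fx" and "((\<lambda>s. f s x) has_vector_derivative ft) (at t within S)"
    and "(f t has_derivative fx) (at x)"
proof -
  have L: "linear (\<lambda>h. fst h *\<^sub>R ft + fx (snd h))"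
    using has_derivative_linear[OF D] .
  show lin: "linear fx"
  proof
    fix v w show "fx (v + w) = fx v + fx w"
      using linear_add[OF L, of "(0, v)" "(0, w)"] by simp
  next
    fix c v show "fx (c *\<^sub>R v) = c *\<^sub>R fx v"
      using linear_scale[OF L, of c "(0, v)"] by simp
  qed
  have "((\<lambda>s. (s, x)) has_derivative (\<lambda>y. (y, 0))) (at t within S)"
    by (auto intro!: derivative_eq_intros)
  from diff_chain_within[OF this has_derivative_subset[OF D]]
  have "((\<lambda>s. f s x) has_derivative (\<lambda>y. y *\<^sub>R ft + fx 0)) (at t within S)"
    by (auto simp: o_def)
  then show "((\<lambda>s. f s x) has_vector_derivative ft) (at t within S)"
    unfolding has_vector_derivative_def using linear_0[OF lin] by simp
  have "((\<lambda>y. (t, y)) has_derivative (\<lambda>y. (0, y))) (at x within UNIV)"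
    by (auto intro!: derivative_eq_intros)
  from diff_chain_within[OF this has_derivative_subset[OF D]]
  show "(f t has_derivative fx) (at x)"
    using t by (auto simp: o_def)
qed

lemma C1_on_imp_has_C1_derivs:
  assumes "C1_on a T f"
  obtains ft fx where "has_C1_derivs a T f ft fx"
proof -
  obtain ft fx where D: "\<And>t x. t \<in> {a..T} \<Longrightarrow>
         ((\<lambda>p. f (fst p) (snd p)) has_derivative (\<lambda>h. fst h *\<^sub>R ft t x + fx t x (snd h)))
           (at (t, x) within {a..T} \<times> UNIV)"
    and cont_ft: "continuous_on ({a..T} \<times> UNIV) (\<lambda>p. ft (fst p) (snd p))"
    and cont_fx: "\<And>i. i \<in> Basis \<Longrightarrow> continuous_on ({a..T} \<times> UNIV) (\<lambda>p. fx (fst p) (snd p) i)"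
    using assms unfolding C1_on_def by blast
  note partials = has_derivative_partials[OF D]
  have "continuous_on ({a..T} \<times> UNIV) (\<lambda>p. f (fst p) (snd p))"
    unfolding continuous_on_eq_continuous_within
  proof
    fix p :: "real \<times> 'a" assume "p \<in> {a..T} \<times> UNIV"
    then show "continuous (at p within {a..T} \<times> UNIV) (\<lambda>p. f (fst p) (snd p))"
      using has_derivative_continuous[OF D[of "fst p" "snd p"]] by (simp add: mem_Times_iff)
  qed
  moreover have "continuous_on ({a..T} \<times> UNIV) (\<lambda>p. fx (fst p) (snd p) v)" for v
    by (rule continuous_on_linear_apply[OF _ cont_fx]) (auto intro: partials(1) simp: mem_Times_iff)
  ultimately show ?thesis
    using partials(2,3) cont_ft that has_C1_derivsI by blast
qed

lemma has_C1_derivs_bilinear: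
  fixes prod :: "'b::real_normed_vector \<Rightarrow> 'c::real_normed_vector \<Rightarrow> 'd::real_normed_vector"
  assumes b: "bounded_bilinear prod" and f: "has_C1_derivs a T f ft fx" and g: "has_C1_derivs a T g gt gx"
  shows "has_C1_derivs a T (\<lambda>t x. prod (f t x) (g t x))
     (\<lambda>t x. prod (f t x) (gt t x) + prod (ft t x) (g t x))
     (\<lambda>t x v. prod (f t x) (gx t x v) + prod (fx t x v) (g t x))"
  using bounded_bilinear.has_vector_derivative[OF b has_C1_derivsD(1)[OF f] has_C1_derivsD(1)[OF g]]
    bounded_bilinear.FDERIV[OF b has_C1_derivsD(2)[OF f] has_C1_derivsD(2)[OF g]]
    has_C1_derivsD(3-5)[OF f] has_C1_derivsD(3-5)[OF g]
  by (intro has_C1_derivsI continuous_on_add bounded_bilinear.continuous_on[OF b]) auto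

lemma has_C1_derivs_add:
  assumes f: "has_C1_derivs a T f ft fx" and g: "has_C1_derivs a T g gt gx"
  shows "has_C1_derivs a T (\<lambda>t x. f t x + g t x) (\<lambda>t x. ft t x + gt t x) (\<lambda>t x v. fx t x v + gx t x v)"
  using has_vector_derivative_add[OF has_C1_derivsD(1)[OF f] has_C1_derivsD(1)[OF g]]
    has_derivative_add[OF has_C1_derivsD(2)[OF f] has_C1_derivsD(2)[OF g]]
    has_C1_derivsD(3-5)[OF f] has_C1_derivsD(3-5)[OF g]
  by (intro has_C1_derivsI continuous_on_add) auto

lemma has_C1_derivs_const: "has_C1_derivs a T (\<lambda>t x. c) (\<lambda>t x. 0) (\<lambda>t x v. 0)"
  by (rule has_C1_derivsI) (auto intro: has_vector_derivative_const has_derivative_const continuous_on_const)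

lemma has_C1_derivs_diff:
  assumes f: "has_C1_derivs a T f ft fx" and g: "has_C1_derivs a T g gt gx"
  shows "has_C1_derivs a T (\<lambda>t x. f t x - g t x) (\<lambda>t x. ft t x - gt t x) (\<lambda>t x v. fx t x v - gx t x v)"
  using has_C1_derivs_add[OF f has_C1_derivs_bilinear[OF bounded_bilinear_scaleR has_C1_derivs_const g, of "-1"]]
  by simp

lemma has_C1_derivs_time_deriv_eq:
  assumes f: "has_C1_derivs a T f ft fx" and "a < T" "t \<in> {a..T}"
  shows "pdt a T f t x = ft t x"
  using vector_derivative_within_cbox[of a T t, unfolded cbox_interval, OF assms(2,3) has_C1_derivsD(1)[OF f assms(3)]]
  unfolding pdt_def .

lemma has_C1_derivs_space_deriv_eq:
  assumes f: "has_C1_derivs a T f ft fx" and "t \<in> {a..T}"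
  shows "pdx i (f t) x = fx t x i"
proof -
  note d = has_C1_derivsD(2)[OF f assms(2)]
  have "((\<lambda>h. x + h *\<^sub>R i) has_derivative (\<lambda>h. h *\<^sub>R i)) (at 0)"
    by (auto intro!: derivative_eq_intros)
  from has_derivative_compose[OF this d]
  have "((\<lambda>h. f t (x + h *\<^sub>R i)) has_vector_derivative fx t x i) (at 0)"
    unfolding has_vector_derivative_def by (simp add: linear_scale[OF has_derivative_linear[OF d]])
  then show ?thesis unfolding pdx_def by (rule vector_derivative_at)
qed

lemma pdt_eq_0:
  assumes "a < T" "t \<in> {a..T}" "\<And>s. s \<in> {a..T} \<Longrightarrow> f s x = 0"
  shows "pdt a T f t x = 0"
proof -
  have "((\<lambda>s. f s x) has_vector_derivative 0) (at t within {a..T})"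
    by (rule has_vector_derivative_transform[OF assms(2) _ has_vector_derivative_const]) (use assms(3) in simp)
  from vector_derivative_within_cbox[of a T t, unfolded cbox_interval, OF assms(1,2) this]
  show ?thesis unfolding pdt_def .
qed

definition C1_partials :: "real \<Rightarrow> real \<Rightarrow> (real \<Rightarrow> 'a::euclidean_space \<Rightarrow> 'b::real_normed_vector) \<Rightarrow> bool" where
  "C1_partials a T f \<longleftrightarrow> has_C1_derivs a T f (pdt a T f) (\<lambda>t x v. pdx v (f t) x)"

lemma has_C1_derivs_imp_C1_partials:
  assumes f: "has_C1_derivs a T f ft fx" and "a < T"
  shows "C1_partials a T f"
proof -
  have ft: "pdt a T f t x = ft t x" and fx: "pdx v (f t) x = fx t x v" if "t \<in> {a..T}" for t x v
    using has_C1_derivs_time_deriv_eq[OF f assms(2) that] has_C1_derivs_space_deriv_eq[OF f that] by auto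
  have fx': "(\<lambda>v. pdx v (f t) x) = fx t x" if "t \<in> {a..T}" for t x
    using fx[OF that] by auto
  show ?thesis
    unfolding C1_partials_def
  proof (rule has_C1_derivsI)
    show "continuous_on ({a..T} \<times> UNIV) (\<lambda>p. pdt a T f (fst p) (snd p))"
      by (rule continuous_on_eq[OF has_C1_derivsD(4)[OF f]]) (auto simp: ft)
    show "continuous_on ({a..T} \<times> UNIV) (\<lambda>p. pdx v (f (fst p)) (snd p))" for v
      by (rule continuous_on_eq[OF has_C1_derivsD(5)[OF f]]) (auto simp: fx)
  qed (use has_C1_derivsD[OF f] ft fx' in auto)
qed

lemma C1_on_imp_C1_partials: "C1_on a T f \<Longrightarrow> a < T \<Longrightarrow> C1_partials a T f"
  by (metis C1_on_imp_has_C1_derivs has_C1_derivs_imp_C1_partials)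

lemma C1_partials_bilinear:
  fixes prod :: "'b::real_normed_vector \<Rightarrow> 'c::real_normed_vector \<Rightarrow> 'd::real_normed_vector"
    and f :: "real \<Rightarrow> 'a::euclidean_space \<Rightarrow> 'b"
  assumes "bounded_bilinear prod" "C1_partials a T f" "C1_partials a T g" "a < T"
  shows "C1_partials a T (\<lambda>t x. prod (f t x) (g t x))"
  using assms has_C1_derivs_bilinear has_C1_derivs_imp_C1_partials unfolding C1_partials_def by blast

lemma C1_partials_add:
  assumes "C1_partials a T f" "C1_partials a T g" "a < T"
  shows "C1_partials a T (\<lambda>t x. f t x + g t x)"
  using assms has_C1_derivs_add has_C1_derivs_imp_C1_partials unfolding C1_partials_def by blast

lemma C1_partials_diff:
  assumes "C1_partials a T f" "C1_partials a T g" "a < T"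
  shows "C1_partials a T (\<lambda>t x. f t x - g t x)"
  using assms has_C1_derivs_diff has_C1_derivs_imp_C1_partials unfolding C1_partials_def by blast

lemma C1_partials_const: "a < T \<Longrightarrow> C1_partials a T (\<lambda>t x. c)"
  using has_C1_derivs_const has_C1_derivs_imp_C1_partials by blast

section \<open>Pointwise algebra of the energy density and the running cost\<close>

text \<open>The energy density \<open>\<rho> |u - v|\<^sup>2 + 2 \<rho> e\<close> relative to a velocity \<open>v\<close>, written in the conserved
  variables \<open>n = \<rho> E\<close>, \<open>m = \<rho> u\<close> and \<open>r = \<rho>\<close>, in which it is linear.\<close>
definition energy_form :: "'a::real_inner \<Rightarrow> real \<Rightarrow> 'a \<Rightarrow> real \<Rightarrow> real" where
  "energy_form v n m r = 2 * n - 2 * (v \<bullet> m) + (v \<bullet> v) * r"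

lemma energy_form_density:
  "energy_form v (r * E) (r *\<^sub>R u) r = r * (norm (u - v))\<^sup>2 + 2 * r * (E - (norm u)\<^sup>2 / 2)"
  unfolding energy_form_def
  by (simp add: power2_norm_eq_inner inner_diff_left inner_diff_right inner_commute algebra_simps)

lemma energy_form_diff:
  "energy_form v (n - n') (m - m') (r - r') = energy_form v n m r - energy_form v n' m' r'"
  unfolding energy_form_def by (simp add: inner_diff_right algebra_simps)

lemma energy_form_sum:
  "(\<Sum>i\<in>I. energy_form v (n i) (m i) (r i)) = energy_form v (\<Sum>i\<in>I. n i) (\<Sum>i\<in>I. m i) (\<Sum>i\<in>I. r i)"
  unfolding energy_form_def
  by (simp add: sum.distrib sum_subtractf sum_distrib_left inner_sum_right)

lemma has_C1_derivs_energy_form: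
  fixes v :: "'b::real_inner" and n r :: "real \<Rightarrow> 'a::euclidean_space \<Rightarrow> real" and m :: "real \<Rightarrow> 'a \<Rightarrow> 'b"
  assumes "has_C1_derivs a T n nt nx" "has_C1_derivs a T m mt mx" "has_C1_derivs a T r rt rx"
  shows "has_C1_derivs a T (\<lambda>t x. energy_form v (n t x) (m t x) (r t x))
     (\<lambda>t x. energy_form v (nt t x) (mt t x) (rt t x))
     (\<lambda>t x h. energy_form v (nx t x h) (mx t x h) (rx t x h))"
proof -
  have scale: "has_C1_derivs a T (\<lambda>t x. c * f t x) (\<lambda>t x. c * ft t x) (\<lambda>t x h. c * fx t x h)"
    if "has_C1_derivs a T f ft fx" for c and f ft :: "real \<Rightarrow> 'a \<Rightarrow> real" and fx
    using has_C1_derivs_bilinear[OF bounded_bilinear_mult has_C1_derivs_const that] by simp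
  have "has_C1_derivs a T (\<lambda>t x. v \<bullet> m t x) (\<lambda>t x. v \<bullet> mt t x) (\<lambda>t x h. v \<bullet> mx t x h)"
    using has_C1_derivs_bilinear[OF bounded_bilinear_inner has_C1_derivs_const assms(2)] by simp
  from has_C1_derivs_add[OF has_C1_derivs_diff[OF scale[OF assms(1)] scale[OF this]] scale[OF assms(3)]]
  show ?thesis unfolding energy_form_def .
qed

lemma inner_le_half_norms: "x \<bullet> y \<le> (norm x)\<^sup>2 / 2 + (norm y)\<^sup>2 / 2"
  for x y :: "'a::real_inner"
proof -
  have "0 \<le> (x - y) \<bullet> (x - y)" by simp
  then show ?thesis
    by (simp add: power2_norm_eq_inner inner_diff_left inner_diff_right inner_commute)
qed

lemma power_le_running_cost:
  fixes u v F1 :: "'a::real_inner" and r e s F2 :: real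
  assumes s: "s > 0" and e: "e > 0" and r: "r \<ge> 0"
  shows "2 * (r * (F2 - v \<bullet> F1)) \<le> (1 / s) * (r * (norm (u - v))\<^sup>2 + 2 * r * e
     + s\<^sup>2 * (r * (norm F1)\<^sup>2 + r / (2 * e) * (F2 - u \<bullet> F1)\<^sup>2))"
proof -
  define A where "A = F2 - u \<bullet> F1"
  define B where "B = (u - v) \<bullet> F1"
  define N where "N = (norm (u - v))\<^sup>2"
  define M where "M = (norm F1)\<^sup>2"
  \<comment> \<open>Two completed squares: \<open>|(u - v) - s F1|\<^sup>2 \<ge> 0\<close> and \<open>(2 e - s A)\<^sup>2 \<ge> 0\<close>.\<close>
  have "0 \<le> (norm ((u - v) - s *\<^sub>R F1))\<^sup>2" by simp
  also have "(norm ((u - v) - s *\<^sub>R F1))\<^sup>2 = N - 2 * s * B + s\<^sup>2 * M"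
    unfolding N_def M_def B_def power2_norm_eq_inner
    by (simp add: inner_diff_left inner_diff_right inner_commute power2_eq_square algebra_simps)
  finally have B_le: "2 * s * B \<le> N + s\<^sup>2 * M" by linarith
  have "0 \<le> (2 * e - s * A)\<^sup>2" by simp
  then have "(2 * s * A - 2 * e) * (2 * e) \<le> s\<^sup>2 * A\<^sup>2"
    by (simp add: power2_eq_square algebra_simps)
  then have "2 * s * A - 2 * e \<le> s\<^sup>2 * A\<^sup>2 / (2 * e)"
    using e by (simp add: pos_le_divide_eq)
  then have A_le: "2 * s * A \<le> 2 * e + s\<^sup>2 * A\<^sup>2 / (2 * e)"
    by linarith
  have "s * (2 * (r * (F2 - v \<bullet> F1))) = r * (2 * s * A) + r * (2 * s * B)"
    by (simp add: A_def B_def inner_diff_left algebra_simps)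
  also have "\<dots> \<le> r * (2 * e + s\<^sup>2 * A\<^sup>2 / (2 * e)) + r * (N + s\<^sup>2 * M)"
    by (intro add_mono mult_left_mono A_le B_le r)
  also have "\<dots> = r * N + 2 * r * e + s\<^sup>2 * (r * M + r / (2 * e) * A\<^sup>2)"
    by (simp add: algebra_simps)
  finally show ?thesis
    unfolding A_def[symmetric] N_def[symmetric] M_def[symmetric]
    using s by (simp add: pos_le_divide_eq mult.commute)
qed

lemma
  fixes u v :: "'a::real_inner" and r e s :: real
  assumes s: "s > 0" and e: "e > 0"
  defines "F1 \<equiv> - (1 / s) *\<^sub>R (u - v)" and "F2 \<equiv> - (1 / s) * (2 * e + u \<bullet> (u - v))"
  shows feedback_power_eq: "r * (F2 - v \<bullet> F1) = - (1 / s) * (r * (norm (u - v))\<^sup>2 + 2 * r * e)"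
    and feedback_running_cost_eq:
      "r * (norm (u - v))\<^sup>2 + 2 * r * e + s\<^sup>2 * (r * (norm F1)\<^sup>2 + r / (2 * e) * (F2 - u \<bullet> F1)\<^sup>2)
        = 2 * (r * (norm (u - v))\<^sup>2 + 2 * r * e)"
proof -
  have "r * (F2 - v \<bullet> F1) = r * (- (1 / s) * (2 * e + u \<bullet> (u - v)) + (1 / s) * (v \<bullet> (u - v)))"
    by (simp add: F1_def F2_def)
  also have "\<dots> = - (1 / s) * (r * ((u - v) \<bullet> (u - v)) + 2 * r * e)"
    by (simp add: inner_diff_left algebra_simps)
  finally show "r * (F2 - v \<bullet> F1) = - (1 / s) * (r * (norm (u - v))\<^sup>2 + 2 * r * e)"
    by (simp add: power2_norm_eq_inner)
  have norm_F1: "(norm F1)\<^sup>2 = (norm (u - v))\<^sup>2 / s\<^sup>2"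
    using s by (simp add: F1_def power_divide power_mult_distrib)
  have "u \<bullet> F1 = - (1 / s) * (u \<bullet> (u - v))"
    by (simp add: F1_def)
  then have F2_F1: "F2 - u \<bullet> F1 = - (2 * e / s)"
    using s by (simp add: F2_def field_simps)
  show "r * (norm (u - v))\<^sup>2 + 2 * r * e + s\<^sup>2 * (r * (norm F1)\<^sup>2 + r / (2 * e) * (F2 - u \<bullet> F1)\<^sup>2)
      = 2 * (r * (norm (u - v))\<^sup>2 + 2 * r * e)"
    unfolding norm_F1 F2_F1 using s e by (simp add: field_simps power2_eq_square)
qed

section \<open>Energy balance of an admissible flow\<close>

definition running_cost :: "real \<Rightarrow> 'a::euclidean_space \<Rightarrow> (real \<Rightarrow> 'a \<Rightarrow> real) \<Rightarrow> (real \<Rightarrow> 'a \<Rightarrow> 'a)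
    \<Rightarrow> (real \<Rightarrow> 'a \<Rightarrow> real) \<Rightarrow> (real \<Rightarrow> 'a \<Rightarrow> 'a) \<Rightarrow> (real \<Rightarrow> 'a \<Rightarrow> real) \<Rightarrow> real \<Rightarrow> 'a \<Rightarrow> real" where
  "running_cost lam v \<rho> u E F1 F2 t x = \<rho> t x * (norm (u t x - v))\<^sup>2 + 2 * \<rho> t x * ie u E t x
      + lam * Gc \<rho> u E F1 F2 t x"

lemma admissibleD:
  assumes "admissible \<Psi> a T \<rho> u E F1 F2"
  shows "C1_on a T \<rho>" "C1_on a T u" "C1_on a T E" "C0_on a T F1" "C0_on a T F2"
    and "\<forall>t\<in>{a..T}. \<forall>x. 0 \<le> \<rho> t x"
    and "\<forall>t\<in>{a..T}. \<forall>x. 0 < ie u E t x"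
    and "\<exists>K. compact K \<and> (\<forall>t\<in>{a..T}. closure {x. \<rho> t x \<noteq> 0} \<subseteq> K)"
    and "\<forall>t\<in>{a..T}. \<forall>x.
        pdt a T \<rho> t x + (\<Sum>i\<in>Basis. pdx i (\<lambda>y. \<rho> t y * (u t y \<bullet> i)) x) = 0
      \<and> pdt a T (\<lambda>s y. \<rho> s y *\<^sub>R u s y) t x
          + (\<Sum>i\<in>Basis. pdx i (\<lambda>y. (\<rho> t y * (u t y \<bullet> i)) *\<^sub>R u t y + prs \<rho> u E t y *\<^sub>R i) x)
        = Q1 \<Psi> \<rho> u t x + \<rho> t x *\<^sub>R F1 t x
      \<and> pdt a T (\<lambda>s y. \<rho> s y * E s y) t x
          + (\<Sum>i\<in>Basis. pdx i (\<lambda>y. (\<rho> t y * E t y + prs \<rho> u E t y) * (u t y \<bullet> i)) x)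
        = Q2 \<Psi> \<rho> u E t x + \<rho> t x * F2 t x"
  using assms by (simp_all add: admissible_def)

locale admissible_flow =
  fixes \<Psi> :: "'a::euclidean_space \<Rightarrow> 'a \<Rightarrow> real" and a T :: real
    and \<rho> :: "real \<Rightarrow> 'a \<Rightarrow> real" and u :: "real \<Rightarrow> 'a \<Rightarrow> 'a" and E :: "real \<Rightarrow> 'a \<Rightarrow> real"
    and F1 :: "real \<Rightarrow> 'a \<Rightarrow> 'a" and F2 :: "real \<Rightarrow> 'a \<Rightarrow> real"
  assumes admissible: "admissible \<Psi> a T \<rho> u E F1 F2" and before_T: "a < T"
    and kernel_continuous: "continuous_on UNIV (\<lambda>p. \<Psi> (fst p) (snd p))"
    and kernel_symmetric: "\<Psi> x y = \<Psi> y x"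
    and kernel_nonneg: "0 \<le> \<Psi> x y"
begin

lemma density_nonneg: "t \<in> {a..T} \<Longrightarrow> 0 \<le> \<rho> t x"
  using admissibleD(6)[OF admissible] by auto

lemma internal_energy_pos: "t \<in> {a..T} \<Longrightarrow> 0 < ie u E t x"
  using admissibleD(7)[OF admissible] by auto

lemma C1_partials_density: "C1_partials a T \<rho>"
  and C1_partials_velocity: "C1_partials a T u"
  and C1_partials_total_energy: "C1_partials a T E"
  using admissibleD(1-3)[OF admissible] before_T by (auto intro: C1_on_imp_C1_partials)

lemma continuous_on_F1: "continuous_on ({a..T} \<times> UNIV) (\<lambda>p. F1 (fst p) (snd p))"
  and continuous_on_F2: "continuous_on ({a..T} \<times> UNIV) (\<lambda>p. F2 (fst p) (snd p))"
  using admissibleD(4,5)[OF admissible] unfolding C0_on_def by auto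

definition support_bound :: "'a set" where
  "support_bound = (SOME K. compact K \<and> (\<forall>t\<in>{a..T}. \<forall>x. x \<notin> K \<longrightarrow> \<rho> t x = 0))"

lemma compact_support_bound: "compact support_bound"
  and density_eq_0_outside: "t \<in> {a..T} \<Longrightarrow> x \<notin> support_bound \<Longrightarrow> \<rho> t x = 0"
proof -
  obtain K where K: "compact K" "\<And>t. t \<in> {a..T} \<Longrightarrow> closure {x. \<rho> t x \<noteq> 0} \<subseteq> K"
    using admissibleD(8)[OF admissible] by auto
  have "\<rho> t x = 0" if "t \<in> {a..T}" "x \<notin> K" for t x
    using K(2)[OF that(1)] closure_subset[of "{x. \<rho> t x \<noteq> 0}"] that(2) by auto
  with K(1) have "\<exists>K. compact K \<and> (\<forall>t\<in>{a..T}. \<forall>x. x \<notin> K \<longrightarrow> \<rho> t x = 0)"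
    by auto
  from someI_ex[OF this]
  show "compact support_bound" "t \<in> {a..T} \<Longrightarrow> x \<notin> support_bound \<Longrightarrow> \<rho> t x = 0"
    unfolding support_bound_def by auto
qed

lemma integrable_if_eq_0_outside:
  fixes f :: "'a \<Rightarrow> 'b::{banach, second_countable_topology}"
  assumes "continuous_on UNIV f" "\<And>x. x \<notin> support_bound \<Longrightarrow> f x = 0"
  shows "integrable lborel f"
  by (rule integrable_lborel_compact_support[OF assms(1) compact_support_bound assms(2)])

definition mass_flux :: "'a \<Rightarrow> real \<Rightarrow> 'a \<Rightarrow> real" where
  "mass_flux i t = (\<lambda>y. \<rho> t y * (u t y \<bullet> i))"

definition momentum_flux :: "'a \<Rightarrow> real \<Rightarrow> 'a \<Rightarrow> 'a" where
  "momentum_flux i t = (\<lambda>y. (\<rho> t y * (u t y \<bullet> i)) *\<^sub>R u t y + prs \<rho> u E t y *\<^sub>R i)"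

definition energy_flux :: "'a \<Rightarrow> real \<Rightarrow> 'a \<Rightarrow> real" where
  "energy_flux i t = (\<lambda>y. (\<rho> t y * E t y + prs \<rho> u E t y) * (u t y \<bullet> i))"

lemma mass_conservation:
  "t \<in> {a..T} \<Longrightarrow> pdt a T \<rho> t x + (\<Sum>i\<in>Basis. pdx i (mass_flux i t) x) = 0"
  using admissibleD(9)[OF admissible] unfolding mass_flux_def by auto

lemma momentum_balance:
  "t \<in> {a..T} \<Longrightarrow> pdt a T (\<lambda>s y. \<rho> s y *\<^sub>R u s y) t x + (\<Sum>i\<in>Basis. pdx i (momentum_flux i t) x)
     = Q1 \<Psi> \<rho> u t x + \<rho> t x *\<^sub>R F1 t x"
  using admissibleD(9)[OF admissible] unfolding momentum_flux_def by auto

lemma energy_balance: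
  "t \<in> {a..T} \<Longrightarrow> pdt a T (\<lambda>s y. \<rho> s y * E s y) t x + (\<Sum>i\<in>Basis. pdx i (energy_flux i t) x)
     = Q2 \<Psi> \<rho> u E t x + \<rho> t x * F2 t x"
  using admissibleD(9)[OF admissible] unfolding energy_flux_def by auto

lemma C1_partials_momentum: "C1_partials a T (\<lambda>s y. \<rho> s y *\<^sub>R u s y)"
  by (rule C1_partials_bilinear[OF bounded_bilinear_scaleR C1_partials_density C1_partials_velocity before_T])

lemma C1_partials_energy_density: "C1_partials a T (\<lambda>s y. \<rho> s y * E s y)"
  by (rule C1_partials_bilinear[OF bounded_bilinear_mult C1_partials_density C1_partials_total_energy before_T])

lemma C1_partials_pressure: "C1_partials a T (prs \<rho> u E)"
proof -
  note mult = C1_partials_bilinear[OF bounded_bilinear_mult _ _ before_T]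
  have "C1_partials a T (\<lambda>s y. E s y - (1/2) * (u s y \<bullet> u s y))"
    by (rule C1_partials_diff[OF C1_partials_total_energy mult[OF C1_partials_const[OF before_T]
          C1_partials_bilinear[OF bounded_bilinear_inner C1_partials_velocity C1_partials_velocity before_T]] before_T])
  moreover have "(\<lambda>s y. E s y - (1/2) * (u s y \<bullet> u s y)) = ie u E"
    by (simp add: fun_eq_iff ie_def power2_norm_eq_inner)
  ultimately have "C1_partials a T (ie u E)"
    by simp
  from mult[OF mult[OF C1_partials_const[OF before_T] C1_partials_density] this]
  show ?thesis
    unfolding prs_def[abs_def] .
qed

lemma C1_partials_fluxes:
  "C1_partials a T (mass_flux i)" "C1_partials a T (momentum_flux i)" "C1_partials a T (energy_flux i)"
proof -
  note mult = C1_partials_bilinear[OF bounded_bilinear_mult _ _ before_T]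
    and scale = C1_partials_bilinear[OF bounded_bilinear_scaleR _ _ before_T]
  have u_i: "C1_partials a T (\<lambda>s y. u s y \<bullet> i)"
    by (rule C1_partials_bilinear[OF bounded_bilinear_inner C1_partials_velocity C1_partials_const before_T])
      (rule before_T)
  have mass: "C1_partials a T (\<lambda>s y. \<rho> s y * (u s y \<bullet> i))"
    by (rule mult[OF C1_partials_density u_i])
  then show "C1_partials a T (mass_flux i)"
    by (simp add: mass_flux_def[abs_def])
  have "C1_partials a T (\<lambda>s y. (\<rho> s y * (u s y \<bullet> i)) *\<^sub>R u s y + prs \<rho> u E s y *\<^sub>R i)"
    by (rule C1_partials_add[OF scale[OF mass C1_partials_velocity]
          scale[OF C1_partials_pressure C1_partials_const[OF before_T]] before_T])
  then show "C1_partials a T (momentum_flux i)"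
    by (simp add: momentum_flux_def[abs_def])
  have "C1_partials a T (\<lambda>s y. (\<rho> s y * E s y + prs \<rho> u E s y) * (u s y \<bullet> i))"
    by (rule mult[OF C1_partials_add[OF C1_partials_energy_density C1_partials_pressure before_T] u_i])
  then show "C1_partials a T (energy_flux i)"
    by (simp add: energy_flux_def[abs_def])
qed

lemma continuous_on_kernel_slice: "continuous_on UNIV (\<Psi> x)"
  using continuous_on_slice[of UNIV \<Psi> x] kernel_continuous by simp

lemma continuous_on_slices:
  assumes "t \<in> {a..T}"
  shows "continuous_on UNIV (\<rho> t)" "continuous_on UNIV (u t)" "continuous_on UNIV (E t)"
    "continuous_on UNIV (F1 t)" "continuous_on UNIV (F2 t)"
  using continuous_on_slice[OF has_C1_derivsD(3)[OF C1_partials_density[unfolded C1_partials_def]] assms]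
    continuous_on_slice[OF has_C1_derivsD(3)[OF C1_partials_velocity[unfolded C1_partials_def]] assms]
    continuous_on_slice[OF has_C1_derivsD(3)[OF C1_partials_total_energy[unfolded C1_partials_def]] assms]
    continuous_on_slice[OF continuous_on_F1 assms] continuous_on_slice[OF continuous_on_F2 assms]
  by auto

definition energy_rate :: "'a \<Rightarrow> real \<Rightarrow> real" where
  "energy_rate v t = (\<integral>x. energy_form v (pdt a T (\<lambda>s y. \<rho> s y * E s y) t x)
      (pdt a T (\<lambda>s y. \<rho> s y *\<^sub>R u s y) t x) (pdt a T \<rho> t x) \<partial>lborel)"

lemma has_vector_derivative_energy:
  assumes t: "t \<in> {a..T}"
  shows "(energy v \<rho> u E has_vector_derivative energy_rate v t) (at t within {a..T})"
proof -
  note w = has_C1_derivs_energy_form[OF C1_partials_energy_density[unfolded C1_partials_def]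
      C1_partials_momentum[unfolded C1_partials_def] C1_partials_density[unfolded C1_partials_def], of v]
  have "((\<lambda>s. \<integral>x. energy_form v (\<rho> s x * E s x) (\<rho> s x *\<^sub>R u s x) (\<rho> s x) \<partial>lborel)
      has_vector_derivative energy_rate v t) (at t within {a..T})"
    unfolding energy_rate_def
  proof (rule has_vector_derivative_lborel_integral[OF has_C1_derivsD(1,3,4)[OF w] compact_support_bound])
    show "energy_form v (\<rho> s x * E s x) (\<rho> s x *\<^sub>R u s x) (\<rho> s x) = 0"
      if "s \<in> {a..T}" "x \<notin> support_bound" for s x
      using density_eq_0_outside[OF that] by (simp add: energy_form_def)
    show "energy_form v (pdt a T (\<lambda>s y. \<rho> s y * E s y) t x) (pdt a T (\<lambda>s y. \<rho> s y *\<^sub>R u s y) t x)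
        (pdt a T \<rho> t x) = 0" if "x \<notin> support_bound" for x
      using pdt_eq_0[OF before_T t, of "\<lambda>s y. \<rho> s y * E s y"] pdt_eq_0[OF before_T t, of "\<lambda>s y. \<rho> s y *\<^sub>R u s y"]
        pdt_eq_0[OF before_T t, of \<rho>] density_eq_0_outside[OF _ that]
      by (simp add: energy_form_def)
  qed (use t in auto)
  then show ?thesis
    by (simp add: energy_def[abs_def] energy_form_density ie_def)
qed

lemma continuous_on_Q1: "t \<in> {a..T} \<Longrightarrow> continuous_on UNIV (Q1 \<Psi> \<rho> u t)"
  and continuous_on_Q2: "t \<in> {a..T} \<Longrightarrow> continuous_on UNIV (Q2 \<Psi> \<rho> u E t)"
proof -
  assume t: "t \<in> {a..T}"
  note cont = kernel_continuous continuous_on_kernel_slice continuous_on_compose_fst continuous_on_compose_snd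
    continuous_on_slices[OF t]
  have supp: "\<rho> t y = 0" if "y \<notin> support_bound" for y
    using density_eq_0_outside[OF t that] .
  show "continuous_on UNIV (Q1 \<Psi> \<rho> u t)"
    unfolding Q1_def[abs_def]
    by (rule continuous_on_lborel_integral[OF _ compact_support_bound])
      (auto simp: supp intro!: continuous_intros cont)
  show "continuous_on UNIV (Q2 \<Psi> \<rho> u E t)"
    unfolding Q2_def[abs_def]
    by (rule continuous_on_lborel_integral[OF _ compact_support_bound])
      (auto simp: supp intro!: continuous_intros cont)
qed

lemma integral_inner_Q1_eq_0:
  assumes t: "t \<in> {a..T}"
  shows "(\<integral>x. v \<bullet> Q1 \<Psi> \<rho> u t x \<partial>lborel) = 0"
proof -
  define k where "k x y = \<Psi> x y * \<rho> t x * \<rho> t y * (v \<bullet> (u t y - u t x))" for x y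
  note cont = kernel_continuous continuous_on_kernel_slice continuous_on_compose_fst continuous_on_compose_snd
    continuous_on_slices[OF t]
  have supp: "\<rho> t y = 0" if "y \<notin> support_bound" for y
    using density_eq_0_outside[OF t that] .
  have "integrable lborel (\<lambda>p. k (fst p) (snd p))"
    by (rule integrable_lborel_compact_support[OF _ compact_Times[OF compact_support_bound compact_support_bound]])
      (auto simp: k_def supp mem_Times_iff intro!: continuous_intros cont)
  then have "integrable (lborel \<Otimes>\<^sub>M lborel) (\<lambda>(x, y). k x y)"
    by (simp add: lborel_prod split_beta')
  from double_integral_antisym_eq_0[OF sigma_finite_lborel this]
  have "(\<integral>x. (\<integral>y. k x y \<partial>lborel) \<partial>lborel) = 0"
    by (simp add: k_def kernel_symmetric[of _ x for x] inner_diff_right algebra_simps)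
  moreover have "v \<bullet> Q1 \<Psi> \<rho> u t x = (\<integral>y. k x y \<partial>lborel)" for x
  proof -
    have int: "integrable lborel (\<lambda>y. (\<Psi> x y * \<rho> t x * \<rho> t y) *\<^sub>R (u t y - u t x))"
      by (rule integrable_if_eq_0_outside) (auto simp: supp intro!: continuous_intros cont)
    have "(\<integral>y. v \<bullet> ((\<Psi> x y * \<rho> t x * \<rho> t y) *\<^sub>R (u t y - u t x)) \<partial>lborel) = v \<bullet> Q1 \<Psi> \<rho> u t x"
      unfolding Q1_def by (rule integral_inner_right) (rule int)
    then show ?thesis
      by (simp add: k_def)
  qed
  ultimately show ?thesis by simp
qed

lemma Q2_nonpos:
  assumes t: "t \<in> {a..T}"
  shows "Q2 \<Psi> \<rho> u E t x \<le> 0"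
proof -
  have "u t x \<bullet> u t y - E t x - E t y \<le> 0" for y
    using inner_le_half_norms[of "u t x" "u t y"] internal_energy_pos[OF t, of x]
      internal_energy_pos[OF t, of y]
    by (simp add: ie_def)
  then have integrand: "\<Psi> x y * \<rho> t x * \<rho> t y * (u t x \<bullet> u t y - E t x - E t y) \<le> 0" for y
    using kernel_nonneg density_nonneg[OF t] by (simp add: mult_nonneg_nonpos)
  have "0 \<le> (\<integral>y. - (\<Psi> x y * \<rho> t x * \<rho> t y * (u t x \<bullet> u t y - E t x - E t y)) \<partial>lborel)"
    by (rule integral_nonneg_AE, rule AE_I2) (use integrand in simp)
  then show ?thesis
    unfolding Q2_def by simp
qed

lemma energy_form_pdt_eq:
  assumes t: "t \<in> {a..T}"
  shows "energy_form v (pdt a T (\<lambda>s y. \<rho> s y * E s y) t x) (pdt a T (\<lambda>s y. \<rho> s y *\<^sub>R u s y) t x)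
      (pdt a T \<rho> t x)
    = 2 * Q2 \<Psi> \<rho> u E t x - 2 * (v \<bullet> Q1 \<Psi> \<rho> u t x) + 2 * (\<rho> t x * (F2 t x - v \<bullet> F1 t x))
      - (\<Sum>i\<in>Basis. energy_form v (pdx i (energy_flux i t) x) (pdx i (momentum_flux i t) x)
          (pdx i (mass_flux i t) x))"
proof -
  have mass: "pdt a T \<rho> t x = 0 - (\<Sum>i\<in>Basis. pdx i (mass_flux i t) x)"
    unfolding eq_diff_eq by (rule mass_conservation[OF t])
  have momentum: "pdt a T (\<lambda>s y. \<rho> s y *\<^sub>R u s y) t x
      = (Q1 \<Psi> \<rho> u t x + \<rho> t x *\<^sub>R F1 t x) - (\<Sum>i\<in>Basis. pdx i (momentum_flux i t) x)"
    unfolding eq_diff_eq by (rule momentum_balance[OF t])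
  have energy: "pdt a T (\<lambda>s y. \<rho> s y * E s y) t x
      = (Q2 \<Psi> \<rho> u E t x + \<rho> t x * F2 t x) - (\<Sum>i\<in>Basis. pdx i (energy_flux i t) x)"
    unfolding eq_diff_eq by (rule energy_balance[OF t])
  show ?thesis
    unfolding mass momentum energy energy_form_diff energy_form_sum
    by (simp add: energy_form_def inner_add_right algebra_simps)
qed

lemma
  assumes t: "t \<in> {a..T}"
  shows integrable_divergence: "integrable lborel (\<lambda>x. energy_form v (pdx i (energy_flux i t) x)
      (pdx i (momentum_flux i t) x) (pdx i (mass_flux i t) x))"
    and integral_divergence_eq_0: "(\<integral>x. energy_form v (pdx i (energy_flux i t) x)
      (pdx i (momentum_flux i t) x) (pdx i (mass_flux i t) x) \<partial>lborel) = 0"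
proof -
  note flux = has_C1_derivs_energy_form[OF C1_partials_fluxes(3)[unfolded C1_partials_def]
      C1_partials_fluxes(2)[unfolded C1_partials_def] C1_partials_fluxes(1)[unfolded C1_partials_def], of v]
  note deriv = has_C1_derivsD(2)[OF flux t] and cont = continuous_on_slice[OF has_C1_derivsD(5)[OF flux] t]
  have supp: "energy_form v (energy_flux i t x) (momentum_flux i t x) (mass_flux i t x) = 0"
    if "x \<notin> support_bound" for x
    using density_eq_0_outside[OF t that]
    by (simp add: energy_form_def energy_flux_def momentum_flux_def mass_flux_def prs_def)
  show "integrable lborel (\<lambda>x. energy_form v (pdx i (energy_flux i t) x)
      (pdx i (momentum_flux i t) x) (pdx i (mass_flux i t) x))"
    using has_derivative_eq_0_outside_closed[OF deriv compact_imp_closed[OF compact_support_bound] supp]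
    by (intro integrable_if_eq_0_outside[OF cont]) (auto dest: fun_cong)
  show "(\<integral>x. energy_form v (pdx i (energy_flux i t) x)
      (pdx i (momentum_flux i t) x) (pdx i (mass_flux i t) x) \<partial>lborel) = 0"
    by (rule lborel_integral_partial_derivative_eq_0[OF deriv cont compact_support_bound supp])
qed

lemma energy_rate_le:
  assumes t: "t \<in> {a..T}"
  shows "energy_rate v t \<le> 2 * (\<integral>x. \<rho> t x * (F2 t x - v \<bullet> F1 t x) \<partial>lborel)"
proof -
  define divergence where "divergence i x = energy_form v (pdx i (energy_flux i t) x)
      (pdx i (momentum_flux i t) x) (pdx i (mass_flux i t) x)" for i x
  define power where "power x = \<rho> t x * (F2 t x - v \<bullet> F1 t x)" for x
  have supp: "\<rho> t x = 0" if "x \<notin> support_bound" for x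
    using density_eq_0_outside[OF t that] .
  have int_Q1: "integrable lborel (\<lambda>x. v \<bullet> Q1 \<Psi> \<rho> u t x)"
    by (rule integrable_if_eq_0_outside[OF continuous_on_inner[OF continuous_on_const continuous_on_Q1[OF t]]])
      (simp add: Q1_def supp)
  have int_Q2: "integrable lborel (Q2 \<Psi> \<rho> u E t)"
    by (rule integrable_if_eq_0_outside[OF continuous_on_Q2[OF t]]) (simp add: Q2_def supp)
  have int_power: "integrable lborel power"
    unfolding power_def
    by (rule integrable_if_eq_0_outside) (auto simp: supp intro!: continuous_intros continuous_on_slices[OF t])
  have int_divergence: "integrable lborel (divergence i)" for i
    unfolding divergence_def[abs_def] by (rule integrable_divergence[OF t])
  have "energy_rate v t = (\<integral>x. 2 * Q2 \<Psi> \<rho> u E t x - 2 * (v \<bullet> Q1 \<Psi> \<rho> u t x) + 2 * power x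
      - (\<Sum>i\<in>Basis. divergence i x) \<partial>lborel)"
    unfolding energy_rate_def energy_form_pdt_eq[OF t] divergence_def power_def ..
  also have "\<dots> = 2 * integral\<^sup>L lborel (Q2 \<Psi> \<rho> u E t) - 2 * (\<integral>x. v \<bullet> Q1 \<Psi> \<rho> u t x \<partial>lborel)
      + 2 * integral\<^sup>L lborel power - (\<Sum>i\<in>Basis. integral\<^sup>L lborel (divergence i))"
    using int_Q1 int_Q2 int_power int_divergence by simp
  also have "\<dots> = 2 * integral\<^sup>L lborel (Q2 \<Psi> \<rho> u E t) + 2 * integral\<^sup>L lborel power"
    using integral_inner_Q1_eq_0[OF t] integral_divergence_eq_0[OF t] by (simp add: divergence_def[abs_def])
  also have "\<dots> \<le> 2 * integral\<^sup>L lborel power"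
    using integral_nonneg_AE[of "\<lambda>x. - Q2 \<Psi> \<rho> u E t x" lborel] Q2_nonpos[OF t] by simp
  finally show ?thesis
    unfolding power_def .
qed

lemma energy_nonneg: "t \<in> {a..T} \<Longrightarrow> 0 \<le> energy v \<rho> u E t"
  unfolding energy_def
  by (intro integral_nonneg_AE AE_I2 add_nonneg_nonneg mult_nonneg_nonneg density_nonneg
      less_imp_le[OF internal_energy_pos]) auto

lemma continuous_on_energy: "continuous_on {a..T} (energy v \<rho> u E)"
  using has_vector_derivative_continuous[OF has_vector_derivative_energy]
  by (simp add: continuous_on_eq_continuous_within)

lemma running_cost_nonneg: "0 \<le> lam \<Longrightarrow> t \<in> {a..T} \<Longrightarrow> 0 \<le> running_cost lam v \<rho> u E F1 F2 t x"
  using density_nonneg[of t x] internal_energy_pos[of t x] unfolding running_cost_def Gc_def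
  by (intro add_nonneg_nonneg mult_nonneg_nonneg) auto

lemma continuous_on_running_cost:
  "continuous_on ({a..T} \<times> UNIV) (\<lambda>p. running_cost lam v \<rho> u E F1 F2 (fst p) (snd p))"
proof -
  have cont_ie: "continuous_on ({a..T} \<times> UNIV) (\<lambda>p. ie u E (fst p) (snd p))"
    unfolding ie_def
    using has_C1_derivsD(3)[OF C1_partials_velocity[unfolded C1_partials_def]]
      has_C1_derivsD(3)[OF C1_partials_total_energy[unfolded C1_partials_def]]
    by (intro continuous_intros) auto
  have ie_nonzero: "2 * ie u E (fst p) (snd p) \<noteq> 0" if "p \<in> {a..T} \<times> UNIV" for p
    using internal_energy_pos[of "fst p" "snd p"] that by (auto simp: mem_Times_iff)
  show ?thesis
    unfolding running_cost_def Gc_def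
    using has_C1_derivsD(3)[OF C1_partials_density[unfolded C1_partials_def]]
      has_C1_derivsD(3)[OF C1_partials_velocity[unfolded C1_partials_def]]
      continuous_on_F1 continuous_on_F2
    by (intro continuous_intros cont_ie ballI ie_nonzero)
qed

lemma running_cost_eq_0_outside:
  "t \<in> {a..T} \<Longrightarrow> x \<notin> support_bound \<Longrightarrow> running_cost lam v \<rho> u E F1 F2 t x = 0"
  by (simp add: running_cost_def Gc_def density_eq_0_outside)

lemma integrable_running_cost:
  "t \<in> {a..T} \<Longrightarrow> integrable lborel (running_cost lam v \<rho> u E F1 F2 t)"
  by (rule integrable_if_eq_0_outside[OF continuous_on_slice[OF continuous_on_running_cost]])
    (simp_all add: running_cost_eq_0_outside)

lemma continuous_on_integral_running_cost:
  "continuous_on {a..T} (\<lambda>t. \<integral>x. running_cost lam v \<rho> u E F1 F2 t x \<partial>lborel)"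
  by (rule continuous_on_lborel_integral[OF continuous_on_running_cost compact_support_bound
        running_cost_eq_0_outside])

lemma cost_eq_integral:
  assumes "b \<in> {a..T}"
  shows "cost lam v b T \<rho> u E F1 F2 = integral {b..T} (\<lambda>t. \<integral>x. running_cost lam v \<rho> u E F1 F2 t x \<partial>lborel)"
proof -
  have "continuous_on {b..T} (\<lambda>t. \<integral>x. running_cost lam v \<rho> u E F1 F2 t x \<partial>lborel)"
    by (rule continuous_on_subset[OF continuous_on_integral_running_cost]) (use assms in auto)
  then show ?thesis
    unfolding cost_def running_cost_def[symmetric]
    by (rule set_borel_integral_eq_integral(2)[OF borel_integrable_atLeastAtMost'])
qed

lemma energy_rate_le_running_cost:
  assumes lam: "0 < lam" and t: "t \<in> {a..T}"
  shows "energy_rate v t \<le> (1 / sqrt lam) * (\<integral>x. running_cost lam v \<rho> u E F1 F2 t x \<partial>lborel)"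
proof -
  have int: "integrable lborel (\<lambda>x. (1 / sqrt lam) * running_cost lam v \<rho> u E F1 F2 t x)"
    using integrable_running_cost[OF t] by simp
  have "energy_rate v t \<le> 2 * (\<integral>x. \<rho> t x * (F2 t x - v \<bullet> F1 t x) \<partial>lborel)"
    by (rule energy_rate_le[OF t])
  also have "\<dots> = (\<integral>x. 2 * (\<rho> t x * (F2 t x - v \<bullet> F1 t x)) \<partial>lborel)"
    by simp
  also have "\<dots> \<le> (\<integral>x. (1 / sqrt lam) * running_cost lam v \<rho> u E F1 F2 t x \<partial>lborel)"
  proof (rule integral_mono'[OF int])
    fix x
    show "2 * (\<rho> t x * (F2 t x - v \<bullet> F1 t x)) \<le> 1 / sqrt lam * running_cost lam v \<rho> u E F1 F2 t x"
      using power_le_running_cost[of "sqrt lam" "ie u E t x" "\<rho> t x" "F2 t x" v "F1 t x" "u t x"]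
        lam internal_energy_pos[OF t] density_nonneg[OF t]
      by (simp add: running_cost_def Gc_def)
    show "0 \<le> 1 / sqrt lam * running_cost lam v \<rho> u E F1 F2 t x"
      using running_cost_nonneg[OF _ t] lam by simp
  qed
  finally show ?thesis by simp
qed

lemma energy_increase_le_cost:
  assumes lam: "0 < lam" and t12: "a \<le> t1" "t1 \<le> t2" "t2 \<le> T"
  shows "energy v \<rho> u E t2 - energy v \<rho> u E t1 \<le> (1 / sqrt lam) * cost lam v t1 T \<rho> u E F1 F2"
proof -
  define c where "c t = (1 / sqrt lam) * (\<integral>x. running_cost lam v \<rho> u E F1 F2 t x \<partial>lborel)" for t
  have sub: "{t1..t2} \<subseteq> {a..T}" "{t1..T} \<subseteq> {a..T}"
    using t12 by auto
  have int_c: "c integrable_on {t1..T}"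
    unfolding c_def
    by (rule integrable_continuous_interval, rule continuous_on_subset[OF _ sub(2)])
      (intro continuous_intros continuous_on_integral_running_cost)
  have c_nonneg: "0 \<le> c t" if "t \<in> {a..T}" for t
    unfolding c_def using lam running_cost_nonneg[OF _ that]
    by (intro mult_nonneg_nonneg integral_nonneg_AE AE_I2) auto
  have "energy v \<rho> u E t2 - energy v \<rho> u E t1 \<le> integral {t1..t2} c"
  proof (rule has_vector_derivative_le_imp_diff_le_integral[OF t12(2)])
    fix t assume "t \<in> {t1..t2}"
    with sub have t: "t \<in> {a..T}" by blast
    show "(energy v \<rho> u E has_vector_derivative energy_rate v t) (at t within {t1..t2})"
      by (rule has_vector_derivative_within_subset[OF has_vector_derivative_energy[OF t] sub(1)])
    show "energy_rate v t \<le> c t"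
      unfolding c_def by (rule energy_rate_le_running_cost[OF lam t])
  next
    show "c integrable_on {t1..t2}"
      by (rule integrable_on_subinterval[OF int_c]) (use t12 in auto)
  qed
  also have "\<dots> \<le> integral {t1..T} c"
    using t12 c_nonneg by (intro integral_subset_le integrable_on_subinterval[OF int_c] int_c) auto
  also have "\<dots> = (1 / sqrt lam) * cost lam v t1 T \<rho> u E F1 F2"
    using cost_eq_integral[of t1] t12 unfolding c_def by simp
  finally show ?thesis .
qed

lemma energy_le_twice_if_cost_le:
  assumes lam: "0 < lam" and t12: "a \<le> t1" "t1 \<le> t2" "t2 \<le> T"
    and cost: "cost lam v t1 T \<rho> u E F1 F2 \<le> sqrt lam * energy v \<rho> u E t1"
  shows "energy v \<rho> u E t2 \<le> 2 * energy v \<rho> u E t1"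
proof -
  have "(1 / sqrt lam) * cost lam v t1 T \<rho> u E F1 F2 \<le> energy v \<rho> u E t1"
    using cost lam by (simp add: field_simps)
  with energy_increase_le_cost[OF lam t12, of v] show ?thesis
    by linarith
qed

end

section \<open>Feedback and optimal controls\<close>

locale feedback_flow = admissible_flow +
  fixes lam :: real and v :: 'a
  assumes lam_pos: "0 < lam"
    and feedback_F1: "\<And>t x. t \<in> {a..T} \<Longrightarrow> F1 t x = - (1 / sqrt lam) *\<^sub>R (u t x - v)"
    and feedback_F2: "\<And>t x. t \<in> {a..T} \<Longrightarrow>
      F2 t x = - (1 / sqrt lam) * (2 * ie u E t x + u t x \<bullet> (u t x - v))"
begin

lemma feedback_power: "t \<in> {a..T} \<Longrightarrow> \<rho> t x * (F2 t x - v \<bullet> F1 t x)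
    = - (1 / sqrt lam) * (\<rho> t x * (norm (u t x - v))\<^sup>2 + 2 * \<rho> t x * ie u E t x)"
  and feedback_running_cost: "t \<in> {a..T} \<Longrightarrow> running_cost lam v \<rho> u E F1 F2 t x
    = 2 * (\<rho> t x * (norm (u t x - v))\<^sup>2 + 2 * \<rho> t x * ie u E t x)"
proof -
  assume t: "t \<in> {a..T}"
  have s: "0 < sqrt lam"
    using lam_pos by simp
  note e = internal_energy_pos[OF t, of x]
  show "\<rho> t x * (F2 t x - v \<bullet> F1 t x)
      = - (1 / sqrt lam) * (\<rho> t x * (norm (u t x - v))\<^sup>2 + 2 * \<rho> t x * ie u E t x)"
    unfolding feedback_F1[OF t] feedback_F2[OF t]
    by (rule feedback_power_eq[where r="\<rho> t x" and u="u t x" and v=v, OF s e])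
  show "running_cost lam v \<rho> u E F1 F2 t x = 2 * (\<rho> t x * (norm (u t x - v))\<^sup>2 + 2 * \<rho> t x * ie u E t x)"
    using feedback_running_cost_eq[where r="\<rho> t x" and u="u t x" and v=v, OF s e] lam_pos
    unfolding running_cost_def Gc_def feedback_F1[OF t] feedback_F2[OF t] by simp
qed

lemma energy_rate_le_feedback: "t \<in> {a..T} \<Longrightarrow> energy_rate v t \<le> - (2 / sqrt lam) * energy v \<rho> u E t"
  using energy_rate_le[of t v] feedback_power[of t] by (simp add: energy_def)

lemma feedback_cost_le: "cost lam v a T \<rho> u E F1 F2 \<le> sqrt lam * energy v \<rho> u E a"
proof -
  define s where "s = sqrt lam"
  define H where "H = energy v \<rho> u E"
  have s: "0 < s"
    using lam_pos by (simp add: s_def)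
  have "H T - H a \<le> integral {a..T} (\<lambda>t. - (2 / s) * H t)"
  proof (rule has_vector_derivative_le_imp_diff_le_integral[OF less_imp_le[OF before_T]])
    fix t assume t: "t \<in> {a..T}"
    show "(H has_vector_derivative energy_rate v t) (at t within {a..T})"
      unfolding H_def by (rule has_vector_derivative_energy[OF t])
    show "energy_rate v t \<le> - (2 / s) * H t"
      unfolding H_def s_def by (rule energy_rate_le_feedback[OF t])
  next
    show "(\<lambda>t. - (2 / s) * H t) integrable_on {a..T}"
      unfolding H_def by (intro integrable_continuous_interval continuous_intros continuous_on_energy)
  qed
  then have "2 * integral {a..T} H \<le> s * (H a - H T)"
    using s by (simp add: field_simps)
  also have "\<dots> \<le> s * H a"
    using s energy_nonneg[of T v] before_T by (simp add: H_def)
  finally have integral_le: "2 * integral {a..T} H \<le> s * H a" .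
  have "cost lam v a T \<rho> u E F1 F2 = integral {a..T} (\<lambda>t. \<integral>x. running_cost lam v \<rho> u E F1 F2 t x \<partial>lborel)"
    by (rule cost_eq_integral) (use before_T in simp)
  also have "\<dots> = integral {a..T} (\<lambda>t. 2 * H t)"
    by (rule integral_cong) (simp only: feedback_running_cost H_def energy_def integral_mult_right_zero)
  also have "\<dots> \<le> s * H a"
    using integral_le by simp
  finally show ?thesis
    by (simp add: s_def H_def)
qed

end

lemma optimal_cost_le_energy:
  assumes opt: "optimal \<Psi> lam v T \<rho> u E F1 F2" and lam: "0 < lam" and t1: "t1 \<in> {0..<T}"
    and kernel: "continuous_on UNIV (\<lambda>p. \<Psi> (fst p) (snd p))" "\<And>x y. \<Psi> x y = \<Psi> y x" "\<And>x y. 0 \<le> \<Psi> x y"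
    and adm: "admissible \<Psi> t1 T \<rho>' u' E' F1' F2'"
    and init: "\<forall>x. \<rho>' t1 x = \<rho> t1 x \<and> u' t1 x = u t1 x \<and> E' t1 x = E t1 x"
    and F1': "\<forall>t\<in>{t1..T}. \<forall>x. F1' t x = - (1 / sqrt lam) *\<^sub>R (u' t x - v)"
    and F2': "\<forall>t\<in>{t1..T}. \<forall>x. F2' t x = - (1 / sqrt lam) * (2 * ie u' E' t x + u' t x \<bullet> (u' t x - v))"
  shows "cost lam v t1 T \<rho> u E F1 F2 \<le> sqrt lam * energy v \<rho> u E t1"
proof -
  interpret controlled: feedback_flow \<Psi> t1 T \<rho>' u' E' F1' F2' lam v
    using adm t1 kernel lam F1' F2' by unfold_locales auto
  have "cost lam v t1 T \<rho> u E F1 F2 \<le> cost lam v t1 T \<rho>' u' E' F1' F2'"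
    using opt adm init t1 unfolding optimal_def by auto
  also have "\<dots> \<le> sqrt lam * energy v \<rho>' u' E' t1"
    by (rule controlled.feedback_cost_le)
  also have "energy v \<rho>' u' E' t1 = energy v \<rho> u E t1"
    using init by (simp add: energy_def ie_def)
  finally show ?thesis .
qed

theorem lemma4p4:
  fixes \<Psi> :: "'a::euclidean_space \<Rightarrow> 'a \<Rightarrow> real"
    and T lam :: real and vbar :: 'a
    and \<rho> :: "real \<Rightarrow> 'a \<Rightarrow> real" and u :: "real \<Rightarrow> 'a \<Rightarrow> 'a" and E :: "real \<Rightarrow> 'a \<Rightarrow> real"
    and F1 :: "real \<Rightarrow> 'a \<Rightarrow> 'a" and F2 :: "real \<Rightarrow> 'a \<Rightarrow> real"
  assumes T: "T > 0" and lam: "lam > 0"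
    and Psi_lip: "\<exists>L. L-lipschitz_on UNIV (\<lambda>p. \<Psi> (fst p) (snd p))"
    and Psi_sym: "\<And>x y. \<Psi> x y = \<Psi> y x"
    and Psi_nonneg: "\<And>x y. 0 \<le> \<Psi> x y"
    and Psi_bdd: "bounded (range (\<lambda>p. \<Psi> (fst p) (snd p)))"
    and opt: "optimal \<Psi> lam vbar T \<rho> u E F1 F2"
    and feedback: "\<forall>a\<in>{0..<T}. \<exists>\<rho>' u' E' F1' F2'.
        admissible \<Psi> a T \<rho>' u' E' F1' F2'
        \<and> (\<forall>x. \<rho>' a x = \<rho> a x \<and> u' a x = u a x \<and> E' a x = E a x)
        \<and> (\<forall>t\<in>{a..T}. \<forall>x. F1' t x = - (1 / sqrt lam) *\<^sub>R (u' t x - vbar))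
        \<and> (\<forall>t\<in>{a..T}. \<forall>x. F2' t x = - (1 / sqrt lam) * (2 * ie u' E' t x + u' t x \<bullet> (u' t x - vbar)))"
  shows "\<forall>t1 t2. 0 \<le> t1 \<and> t1 \<le> t2 \<and> t2 \<le> T \<longrightarrow>
           energy vbar \<rho> u E t2
             \<le> (if lam \<le> 1 then 1 + 1 / sqrt lam else 1 + sqrt lam) * energy vbar \<rho> u E t1"
proof (intro allI impI)
  fix t1 t2 assume t12: "0 \<le> t1 \<and> t1 \<le> t2 \<and> t2 \<le> T"
  have kernel_continuous: "continuous_on UNIV (\<lambda>p. \<Psi> (fst p) (snd p))"
    using Psi_lip lipschitz_on_continuous_on by blast
  interpret optimal: admissible_flow \<Psi> 0 T \<rho> u E F1 F2
    using opt T kernel_continuous Psi_sym Psi_nonneg unfolding optimal_def by unfold_locales auto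
  have "energy vbar \<rho> u E t2 \<le> 2 * energy vbar \<rho> u E t1"
  proof (cases "t1 < T")
    case True
    with t12 have t1: "t1 \<in> {0..<T}" by auto
    with feedback optimal_cost_le_energy[OF opt lam t1 kernel_continuous Psi_sym Psi_nonneg]
    have "cost lam vbar t1 T \<rho> u E F1 F2 \<le> sqrt lam * energy vbar \<rho> u E t1"
      by blast
    with optimal.energy_le_twice_if_cost_le[OF lam] t12 show ?thesis
      by simp
  next
    case False
    with t12 have "t1 = T" "t2 = T" by auto
    with optimal.energy_nonneg[of T vbar] T show ?thesis
      by simp
  qed
  moreover have "2 \<le> (if lam \<le> 1 then 1 + 1 / sqrt lam else 1 + sqrt lam)"
    using lam by (simp add: real_sqrt_le_1_iff)
  ultimately show "energy vbar \<rho> u E t2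
      \<le> (if lam \<le> 1 then 1 + 1 / sqrt lam else 1 + sqrt lam) * energy vbar \<rho> u E t1"
    using optimal.energy_nonneg[of t1 vbar] t12 by (meson atLeastAtMost_iff mult_right_mono order_trans)
qed

end
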